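(* Let $\mathcal X$ be a finite totally ordered set, $Q\in\mathbb R^{\mathcal X\times\mathcal X}$ an irreducible generator matrix with invariant probability vector $\pi$ having strictly positive entries ($Q^{\mathsf T}\pi=0$), and for each $x\in\mathcal X$ let $\eta_x:[0,\infty)\to[0,\infty)$ be strictly increasing with $\eta_x(0)=0$, $\eta_x(1)=1$. Set $\kappa_{xy}(\rho_x):=Q_{xy}\pi_x\eta_x(\rho_x/\pi_x)$ and, for $\rho\in\mathcal P(\mathcal X)$ and $\zeta\in\mathbb R^{\mathcal X^2/2}$, $$\mathcal H(\rho,\zeta):=\sum_{(x,y)\in\mathcal X^2/2}\Big[\kappa_{xy}(\rho_x)\big(e^{\zeta_{xy}}-1\big)+\kappa_{yx}(\rho_y)\big(e^{-\zeta_{xy}}-1\big)\Big].$$ Let $\mathcal V(\rho):=\sum_{x}\int_{\bar\rho_x}^{\rho_x}\log\eta_x(z/\pi_x)\,dz+C$ if $\rho\ge\bar\rho$ coordinatewise and $\mathcal V(\rho):=\infty$ otherwise, where each $\bar\rho_x\ge0$ is as small as possible such that $\log\eta_x(\cdot/\pi_x)$ is integrable on $[\bar\rho_x,\cdot]$ and $C$ is such that $\inf\mathcal V=0$. Then at every point of differentiability $\rho\in\mathcal P(\mathcal X)$ of $\mathcal V$ (where $d\mathcal V(\rho)_x=\log\eta_x(\rho_x/\pi_x)$), one has $\mathcal H(\rho,\nabla d\mathcal V(\rho))=0$.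
   Context: $\mathcal P(\mathcal X)$ is the set of probability vectors on $\mathcal X$. $\mathcal X^2/2:=\{(x,y)\in\mathcal X\times\mathcal X:x<y\}$. For $\xi\in\mathbb R^{\mathcal X}$ the discrete gradient is $(\nabla\xi)_{xy}:=\xi_y-\xi_x$ for $(x,y)\in\mathcal X^2/2$. (This is the statement that $\mathcal V$ is a quasipotential for the zero-range L-function with dual $\mathcal H$.) *)

theory Defs
  imports Complex_Main
begin

definition generator_matrix :: "('x::finite \<Rightarrow> 'x \<Rightarrow> real) \<Rightarrow> bool" where
  "generator_matrix Q \<longleftrightarrow>
     (\<forall>x y. x \<noteq> y \<longrightarrow> Q x y \<ge> 0) \<and> (\<forall>x. (\<Sum>y\<in>UNIV. Q x y) = 0)"

definition irreducible_generator :: "('x::finite \<Rightarrow> 'x \<Rightarrow> real) \<Rightarrow> bool" where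
  "irreducible_generator Q \<longleftrightarrow>
     (\<forall>x y. (x, y) \<in> {(a, b). a \<noteq> b \<and> Q a b > 0}\<^sup>*)"

definition prob_vectors :: "('x::finite \<Rightarrow> real) set" where
  "prob_vectors = {\<rho>. (\<forall>x. \<rho> x \<ge> 0) \<and> (\<Sum>x\<in>UNIV. \<rho> x) = 1}"

text \<open>Ordered pairs x < y (the index set X^2/2).\<close>
definition half_pairs :: "('x::{finite,linorder} \<times> 'x) set" where
  "half_pairs = {(x, y). x < y}"

definition dgrad :: "('x::{finite,linorder} \<Rightarrow> real) \<Rightarrow> ('x \<times> 'x \<Rightarrow> real)" where
  "dgrad \<xi> = (\<lambda>(x, y). \<xi> y - \<xi> x)"

definition kappa ::
  "('x \<Rightarrow> 'x \<Rightarrow> real) \<Rightarrow> ('x \<Rightarrow> real) \<Rightarrow> ('x \<Rightarrow> real \<Rightarrow> real) \<Rightarrow> 'x \<Rightarrow> 'x \<Rightarrow> real \<Rightarrow> real" where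
  "kappa Q \<pi> \<eta> x y r = Q x y * \<pi> x * \<eta> x (r / \<pi> x)"

definition zr_hamiltonian ::
  "('x::{finite,linorder} \<Rightarrow> 'x \<Rightarrow> real) \<Rightarrow> ('x \<Rightarrow> real) \<Rightarrow> ('x \<Rightarrow> real \<Rightarrow> real)
    \<Rightarrow> ('x \<Rightarrow> real) \<Rightarrow> ('x \<times> 'x \<Rightarrow> real) \<Rightarrow> real" where
  "zr_hamiltonian Q \<pi> \<eta> \<rho> \<zeta> =
     (\<Sum>(x, y)\<in>half_pairs.
        kappa Q \<pi> \<eta> x y (\<rho> x) * (exp (\<zeta> (x, y)) - 1)
      + kappa Q \<pi> \<eta> y x (\<rho> y) * (exp (- \<zeta> (x, y)) - 1))"

text \<open>The derivative of the quasipotential V at a differentiability point rho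
  (interior of the simplex): dV(rho)_x = log eta_x(rho_x / pi_x).\<close>
definition dV :: "('x \<Rightarrow> real) \<Rightarrow> ('x \<Rightarrow> real \<Rightarrow> real) \<Rightarrow> ('x \<Rightarrow> real) \<Rightarrow> 'x \<Rightarrow> real" where
  "dV \<pi> \<eta> \<rho> x = ln (\<eta> x (\<rho> x / \<pi> x))"

end

theory Submission
  imports Defs
begin

text \<open>With \<open>a\<^sub>x = \<eta>\<^sub>x(\<rho>\<^sub>x/\<pi>\<^sub>x)\<close> we have \<open>\<kappa>\<^sub>x\<^sub>y(\<rho>\<^sub>x) = \<pi>\<^sub>x Q\<^sub>x\<^sub>y a\<^sub>x\<close> and
  \<open>exp (\<nabla> dV(\<rho>))\<^sub>x\<^sub>y = a\<^sub>y/a\<^sub>x\<close>, so each ordered pair contributes the probability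
  current \<open>\<pi>\<^sub>x Q\<^sub>x\<^sub>y (a\<^sub>y - a\<^sub>x)\<close>. Summing the currents over all ordered pairs gives
  zero because the rows of \<open>Q\<close> sum to zero and \<open>\<pi>\<close> is invariant; the diagonal
  contributes nothing, and the remaining pairs are exactly those of \<open>\<H>\<close>.\<close>

lemma sum_half_pairs_symmetric:
  fixes f :: "'x::{finite,linorder} \<times> 'x \<Rightarrow> 'a::comm_monoid_add"
  shows "(\<Sum>(x, y)\<in>half_pairs. f (x, y) + f (y, x)) + (\<Sum>x\<in>UNIV. f (x, x)) = (\<Sum>p\<in>UNIV. f p)"
proof -
  have upper: "(\<Sum>(x, y)\<in>half_pairs. f (y, x)) = sum f {(x, y). y < x}"
    by (rule sum.reindex_bij_witness[where i=prod.swap and j=prod.swap])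
       (auto simp: half_pairs_def)
  have diagonal: "(\<Sum>x\<in>UNIV. f (x, x)) = sum f {(x, y). x = y}"
    by (rule sum.reindex_bij_witness[where i="\<lambda>(x, y). x" and j="\<lambda>x. (x, x)"]) auto
  have partition: "(UNIV :: ('x \<times> 'x) set) = half_pairs \<union> {(x, y). y < x} \<union> {(x, y). x = y}"
    by (auto simp: half_pairs_def)
  have "(\<Sum>p\<in>UNIV. f p) = sum f half_pairs + sum f {(x, y). y < x} + sum f {(x, y). x = y}"
    unfolding partition
    by (subst sum.union_disjoint, simp, simp, force simp: half_pairs_def,
        subst sum.union_disjoint, auto simp: half_pairs_def)
  then show ?thesis
    using upper diagonal by (simp add: sum.distrib case_prod_unfold)
qed

lemma sum_stationary_current_eq_0:
  fixes Q :: "'x::finite \<Rightarrow> 'x \<Rightarrow> 'a::comm_ring"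
  assumes row_sums: "\<And>x. (\<Sum>y\<in>UNIV. Q x y) = 0"
    and stationary: "\<And>y. (\<Sum>x\<in>UNIV. \<pi> x * Q x y) = 0"
  shows "(\<Sum>(x, y)\<in>UNIV. \<pi> x * Q x y * (a y - a x)) = 0"
proof -
  have "(\<Sum>(x, y)\<in>UNIV. \<pi> x * Q x y * (a y - a x))
      = (\<Sum>x\<in>UNIV. \<Sum>y\<in>UNIV. \<pi> x * Q x y * a y) - (\<Sum>x\<in>UNIV. \<pi> x * a x * (\<Sum>y\<in>UNIV. Q x y))"
    unfolding UNIV_Times_UNIV[symmetric] sum.cartesian_product[symmetric]
    by (simp add: algebra_simps sum_subtractf sum_distrib_left)
  also have "(\<Sum>x\<in>UNIV. \<Sum>y\<in>UNIV. \<pi> x * Q x y * a y) = (\<Sum>y\<in>UNIV. a y * (\<Sum>x\<in>UNIV. \<pi> x * Q x y))"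
    by (subst sum.swap) (simp add: sum_distrib_left algebra_simps)
  finally show ?thesis
    by (simp add: row_sums stationary)
qed

lemma kappa_exp_dV_diff:
  assumes "\<eta> x (\<rho> x / \<pi> x) > 0" and "\<eta> y (\<rho> y / \<pi> y) > 0"
  shows "kappa Q \<pi> \<eta> x y (\<rho> x) * (exp (dV \<pi> \<eta> \<rho> y - dV \<pi> \<eta> \<rho> x) - 1)
    = \<pi> x * Q x y * (\<eta> y (\<rho> y / \<pi> y) - \<eta> x (\<rho> x / \<pi> x))"
  using assms by (simp add: kappa_def dV_def exp_diff field_simps)

lemma zr_hamiltonian_dgrad_dV:
  fixes Q :: "'x::{finite,linorder} \<Rightarrow> 'x \<Rightarrow> real"
  assumes "\<And>x. \<eta> x (\<rho> x / \<pi> x) > 0"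
  shows "zr_hamiltonian Q \<pi> \<eta> \<rho> (dgrad (dV \<pi> \<eta> \<rho>))
    = (\<Sum>(x, y)\<in>half_pairs. \<pi> x * Q x y * (\<eta> y (\<rho> y / \<pi> y) - \<eta> x (\<rho> x / \<pi> x))
                          + \<pi> y * Q y x * (\<eta> x (\<rho> x / \<pi> x) - \<eta> y (\<rho> y / \<pi> y)))"
  unfolding zr_hamiltonian_def dgrad_def
  by (simp add: case_prod_unfold kappa_exp_dV_diff assms)

lemma strict_mono_on_pos:
  fixes f :: "real \<Rightarrow> real"
  assumes "strict_mono_on {0..} f" and "f 0 = 0" and "r > 0"
  shows "f r > 0"
  using assms by (metis atLeast_iff less_eq_real_def strict_mono_onD)

theorem proposition5p1:
  fixes Q :: "'x::{finite,linorder} \<Rightarrow> 'x \<Rightarrow> real"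
    and \<pi> :: "'x \<Rightarrow> real"
    and \<eta> :: "'x \<Rightarrow> real \<Rightarrow> real"
    and \<rho> :: "'x \<Rightarrow> real"
  assumes gen: "generator_matrix Q"
    and irr: "irreducible_generator Q"
    and pi_prob: "\<pi> \<in> prob_vectors"
    and pi_pos: "\<forall>x. \<pi> x > 0"
    and pi_inv: "\<forall>y. (\<Sum>x\<in>UNIV. \<pi> x * Q x y) = 0"
    and eta_range: "\<forall>x. \<forall>z\<ge>0. \<eta> x z \<ge> 0"
    and eta_mono: "\<forall>x. strict_mono_on {0..} (\<eta> x)"
    and eta0: "\<forall>x. \<eta> x 0 = 0"
    and eta1: "\<forall>x. \<eta> x 1 = 1"
    and rho_prob: "\<rho> \<in> prob_vectors"
    and rho_pos: "\<forall>x. \<rho> x > 0"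
  shows "zr_hamiltonian Q \<pi> \<eta> \<rho> (dgrad (dV \<pi> \<eta> \<rho>)) = 0"
proof -
  define a where "a x = \<eta> x (\<rho> x / \<pi> x)" for x
  define current where "current = (\<lambda>(x, y). \<pi> x * Q x y * (a y - a x))"
  have "a x > 0" for x
    unfolding a_def using strict_mono_on_pos eta_mono eta0 pi_pos rho_pos by simp
  then have "zr_hamiltonian Q \<pi> \<eta> \<rho> (dgrad (dV \<pi> \<eta> \<rho>))
      = (\<Sum>(x, y)\<in>half_pairs. current (x, y) + current (y, x))"
    using zr_hamiltonian_dgrad_dV[of \<eta> \<rho> \<pi> Q] by (simp add: a_def current_def)
  also have "\<dots> = (\<Sum>p\<in>UNIV. current p) - (\<Sum>x\<in>UNIV. current (x, x))"
    using sum_half_pairs_symmetric[of current] by (simp add: eq_diff_eq)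
  also have "(\<Sum>p\<in>UNIV. current p) = 0"
    unfolding current_def
    by (rule sum_stationary_current_eq_0) (use gen pi_inv in \<open>auto simp: generator_matrix_def\<close>)
  finally show ?thesis
    by (simp add: current_def)
qed

end
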